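(* Let $\star$ be a star operation on an integral domain $R$. (1) If every nonzero ideal of $R$ is $\star$-basic, then $R$ is completely integrally closed. (2) Every nonzero ideal of $R$ is $v$-basic if and only if $R$ is completely integrally closed.
   Context: A star operation on a domain $R$ with quotient field $K$ is a map $I\mapsto I^\star$ on nonzero fractional ideals with $(aI)^\star=aI^\star$ ($0\ne a\in K$), $R^\star=R$, $I\subseteq I^\star$, $I\subseteq J\Rightarrow I^\star\subseteq J^\star$, $I^{\star\star}=I^\star$. The $v$-operation is $I_v=(I^{-1})^{-1}$ where $I^{-1}=(R:I)=\{x\in K:xI\subseteq R\}$. For a nonzero ideal $I$, an ideal $J\subseteq I$ is a $\star$-reduction of $I$ if $(JI^n)^\star=(I^{n+1})^\star$ for some integer $n\ge0$; $I$ is $\star$-basic if every $\star$-reduction $J$ of $I$ satisfies $J^\star=I^\star$. A domain is completely integrally closed iff every nonzero ideal $I$ is $v$-invertible, i.e. $(II^{-1})_v=R$. *)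

theory Defs
  imports Main
begin

text \<open>An integral domain R is modelled as a subring of a field 'a whose
  quotient field is all of 'a.\<close>

definition domain_with_qf :: "'a::field set \<Rightarrow> bool" where
  "domain_with_qf R \<longleftrightarrow> 0 \<in> R \<and> 1 \<in> R \<and>
     (\<forall>x\<in>R. \<forall>y\<in>R. x + y \<in> R \<and> x - y \<in> R \<and> x * y \<in> R) \<and>
     (\<forall>x. \<exists>a\<in>R. \<exists>b\<in>R. b \<noteq> 0 \<and> x = a / b)"

definition submod :: "'a::field set \<Rightarrow> 'a set \<Rightarrow> bool" where
  "submod R M \<longleftrightarrow> 0 \<in> M \<and> (\<forall>x\<in>M. \<forall>y\<in>M. x + y \<in> M) \<and> (\<forall>r\<in>R. \<forall>x\<in>M. r * x \<in> M)"

definition frac_ideal :: "'a::field set \<Rightarrow> 'a set \<Rightarrow> bool" where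
  "frac_ideal R I \<longleftrightarrow> submod R I \<and> I \<noteq> {0} \<and> (\<exists>d\<in>R. d \<noteq> 0 \<and> (\<forall>x\<in>I. d * x \<in> R))"

definition nz_ideal :: "'a::field set \<Rightarrow> 'a set \<Rightarrow> bool" where
  "nz_ideal R I \<longleftrightarrow> submod R I \<and> I \<subseteq> R \<and> I \<noteq> {0}"

definition star_op :: "'a::field set \<Rightarrow> ('a set \<Rightarrow> 'a set) \<Rightarrow> bool" where
  "star_op R st \<longleftrightarrow>
     (\<forall>I. frac_ideal R I \<longrightarrow> frac_ideal R (st I)) \<and>
     (\<forall>I a. frac_ideal R I \<longrightarrow> a \<noteq> 0 \<longrightarrow> st ((\<lambda>x. a * x) ` I) = (\<lambda>x. a * x) ` st I) \<and>
     st R = R \<and>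
     (\<forall>I. frac_ideal R I \<longrightarrow> I \<subseteq> st I) \<and>
     (\<forall>I J. frac_ideal R I \<longrightarrow> frac_ideal R J \<longrightarrow> I \<subseteq> J \<longrightarrow> st I \<subseteq> st J) \<and>
     (\<forall>I. frac_ideal R I \<longrightarrow> st (st I) = st I)"

definition gen_submod :: "'a::field set \<Rightarrow> 'a set \<Rightarrow> 'a set" where
  "gen_submod R S = \<Inter>{M. submod R M \<and> S \<subseteq> M}"

definition ideal_mult :: "'a::field set \<Rightarrow> 'a set \<Rightarrow> 'a set \<Rightarrow> 'a set" where
  "ideal_mult R I J = gen_submod R {x * y | x y. x \<in> I \<and> y \<in> J}"

fun ideal_pow :: "'a::field set \<Rightarrow> 'a set \<Rightarrow> nat \<Rightarrow> 'a set" where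
  "ideal_pow R I 0 = R"
| "ideal_pow R I (Suc n) = ideal_mult R I (ideal_pow R I n)"

definition frac_inv :: "'a::field set \<Rightarrow> 'a set \<Rightarrow> 'a set" where
  "frac_inv R I = {x. \<forall>y\<in>I. x * y \<in> R}"

definition v_op :: "'a::field set \<Rightarrow> 'a set \<Rightarrow> 'a set" where
  "v_op R I = frac_inv R (frac_inv R I)"

definition star_reduction :: "'a::field set \<Rightarrow> ('a set \<Rightarrow> 'a set) \<Rightarrow> 'a set \<Rightarrow> 'a set \<Rightarrow> bool" where
  "star_reduction R st J I \<longleftrightarrow> nz_ideal R J \<and> J \<subseteq> I \<and>
     (\<exists>n. st (ideal_mult R J (ideal_pow R I n)) = st (ideal_pow R I (Suc n)))"

definition star_basic :: "'a::field set \<Rightarrow> ('a set \<Rightarrow> 'a set) \<Rightarrow> 'a set \<Rightarrow> bool" where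
  "star_basic R st I \<longleftrightarrow> (\<forall>J. star_reduction R st J I \<longrightarrow> st J = st I)"

definition completely_integrally_closed :: "'a::field set \<Rightarrow> bool" where
  "completely_integrally_closed R \<longleftrightarrow>
     (\<forall>x. (\<exists>d\<in>R. d \<noteq> 0 \<and> (\<forall>n::nat. d * x ^ n \<in> R)) \<longrightarrow> x \<in> R)"

end

theory Submission
  imports Defs
begin

text \<open>Part (1): if \<open>d x\<^sup>n \<in> R\<close> for all \<open>n\<close>, then inside the \<open>R\<close>-algebra \<open>T = R[x]\<close> the principal
  ideal \<open>J = dR\<close> satisfies \<open>J (dT) = (dT)\<^sup>2\<close> because \<open>T T = T\<close>, so \<open>J\<close> is a \<open>\<star>\<close>-reduction of the
  ideal \<open>I = dT\<close> and basicness gives \<open>I \<subseteq> I\<^sup>\<star> = J\<^sup>\<star> = dR\<close>; hence \<open>dx \<in> dR\<close>.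
  Part (2): if \<open>(JA)\<^sub>v = (IA)\<^sub>v\<close> with \<open>A = I\<^sup>n\<close>, then for \<open>y \<in> J\<^sup>-\<^sup>1\<close>, \<open>i \<in> I\<close> the element
  \<open>u = yi\<close> maps \<open>A\<^sup>-\<^sup>1\<close> into itself; as \<open>1 \<in> A\<^sup>-\<^sup>1\<close>, all powers of \<open>u\<close> lie in \<open>A\<^sup>-\<^sup>1\<close>, so \<open>u\<close>
  is almost integral and hence in \<open>R\<close>. Thus \<open>J\<^sup>-\<^sup>1 \<subseteq> I\<^sup>-\<^sup>1\<close>, i.e. \<open>J\<^sub>v = I\<^sub>v\<close>.\<close>

lemma domain_with_qfD:
  assumes "domain_with_qf R"
  shows "0 \<in> R" "1 \<in> R" "x \<in> R \<Longrightarrow> y \<in> R \<Longrightarrow> x + y \<in> R" "x \<in> R \<Longrightarrow> y \<in> R \<Longrightarrow> x * y \<in> R"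
  using assms unfolding domain_with_qf_def by auto

lemma submod_domain: "domain_with_qf R \<Longrightarrow> submod R R"
  unfolding domain_with_qf_def submod_def by auto

lemma submodD:
  assumes "submod R M"
  shows "0 \<in> M" "x \<in> M \<Longrightarrow> y \<in> M \<Longrightarrow> x + y \<in> M" "r \<in> R \<Longrightarrow> x \<in> M \<Longrightarrow> r * x \<in> M"
  using assms unfolding submod_def by auto

lemma submod_scaled:
  assumes "submod R M"
  shows "submod R ((*) d ` M)"
  unfolding submod_def
proof (intro conjI ballI)
  show "0 \<in> (*) d ` M" using submodD(1)[OF assms] by (metis image_eqI mult_zero_right)
  fix a b assume "a \<in> (*) d ` M" "b \<in> (*) d ` M"
  then show "a + b \<in> (*) d ` M" using submodD(2)[OF assms] by (auto simp flip: distrib_left)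
next
  fix r a assume "r \<in> R" "a \<in> (*) d ` M"
  then show "r * a \<in> (*) d ` M" using submodD(3)[OF assms] by (auto simp: mult.left_commute)
qed

lemma nz_ideal_imp_frac_ideal:
  assumes "domain_with_qf R" "nz_ideal R I"
  shows "frac_ideal R I"
  using assms domain_with_qfD(2)[OF assms(1)] unfolding nz_ideal_def frac_ideal_def
  by (intro conjI bexI[of _ 1]) auto

lemma frac_ideal_domain: "domain_with_qf R \<Longrightarrow> frac_ideal R R"
  using domain_with_qfD[of R] submod_domain[of R] unfolding frac_ideal_def
  by (intro conjI bexI[of _ 1]) auto

lemma submod_gen_submod: "submod R (gen_submod R S)"
  unfolding submod_def gen_submod_def by auto

lemma subset_gen_submod: "S \<subseteq> gen_submod R S"
  unfolding gen_submod_def by auto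

lemma gen_submod_least: "submod R M \<Longrightarrow> S \<subseteq> M \<Longrightarrow> gen_submod R S \<subseteq> M"
  unfolding gen_submod_def by auto

lemma ideal_mult_domain_right:
  assumes "submod R I" "1 \<in> R"
  shows "ideal_mult R I R = I"
  unfolding ideal_mult_def
proof (rule antisym)
  show "gen_submod R {x * y |x y. x \<in> I \<and> y \<in> R} \<subseteq> I"
    using submodD(3)[OF assms(1)] by (intro gen_submod_least[OF assms(1)]) (auto, metis mult.commute)
  have "I \<subseteq> {x * y |x y. x \<in> I \<and> y \<in> R}"
    using assms(2) by (metis (mono_tags, lifting) mem_Collect_eq mult_1_right subsetI)
  then show "I \<subseteq> gen_submod R {x * y |x y. x \<in> I \<and> y \<in> R}"
    using subset_gen_submod by blast
qed

lemma power_mem_ideal_pow: "domain_with_qf R \<Longrightarrow> i \<in> I \<Longrightarrow> i ^ n \<in> ideal_pow R I n"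
proof (induction n)
  case 0
  then show ?case by (simp add: domain_with_qfD)
next
  case (Suc n)
  then have "i * i ^ n \<in> {x * y |x y. x \<in> I \<and> y \<in> ideal_pow R I n}" by blast
  then show ?case
    unfolding ideal_pow.simps ideal_mult_def using subset_gen_submod by fastforce
qed

lemma ideal_pow_subset:
  assumes "domain_with_qf R" "I \<subseteq> R"
  shows "ideal_pow R I n \<subseteq> R"
proof (induction n)
  case 0
  then show ?case by simp
next
  case (Suc n)
  then have "{x * y |x y. x \<in> I \<and> y \<in> ideal_pow R I n} \<subseteq> R"
    using assms domain_with_qfD(4)[OF assms(1)] by blast
  then show ?case
    unfolding ideal_pow.simps ideal_mult_def
    by (rule gen_submod_least[OF submod_domain[OF assms(1)]])
qed

lemma submod_ideal_pow: "domain_with_qf R \<Longrightarrow> submod R (ideal_pow R I n)"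
  by (cases n) (simp_all add: submod_domain ideal_mult_def submod_gen_submod)

lemma frac_inv_antimono: "X \<subseteq> Y \<Longrightarrow> frac_inv R Y \<subseteq> frac_inv R X"
  unfolding frac_inv_def by auto

lemma frac_inv_gen_submod:
  assumes "domain_with_qf R"
  shows "frac_inv R (gen_submod R S) = frac_inv R S"
proof
  show "frac_inv R (gen_submod R S) \<subseteq> frac_inv R S"
    by (rule frac_inv_antimono[OF subset_gen_submod])
  show "frac_inv R S \<subseteq> frac_inv R (gen_submod R S)"
  proof
    fix z assume z: "z \<in> frac_inv R S"
    have "submod R {g. z * g \<in> R}"
      using assms unfolding submod_def domain_with_qf_def
      by (auto simp: distrib_left mult.left_commute)
    moreover have "S \<subseteq> {g. z * g \<in> R}" using z unfolding frac_inv_def by auto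
    ultimately have "gen_submod R S \<subseteq> {g. z * g \<in> R}" by (rule gen_submod_least)
    then show "z \<in> frac_inv R (gen_submod R S)" unfolding frac_inv_def by auto
  qed
qed

lemma subset_v_op: "X \<subseteq> v_op R X"
  unfolding v_op_def frac_inv_def by (auto simp: mult.commute)

lemma frac_inv_v_op: "frac_inv R (v_op R X) = frac_inv R X"
  by (metis frac_inv_antimono subset_v_op subset_antisym v_op_def)

lemma v_op_principal:
  assumes "domain_with_qf R" "d \<noteq> 0"
  shows "v_op R ((*) d ` R) = (*) d ` R"
proof -
  note R = domain_with_qfD[OF assms(1)]
  have inv: "frac_inv R ((*) d ` R) = {y. y * d \<in> R}"
    unfolding frac_inv_def
    using R(2) R(4) by (fastforce simp: mult.assoc[symmetric] dest: bspec[of _ _ "d * 1"])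
  have "z \<in> frac_inv R {y. y * d \<in> R} \<longleftrightarrow> z \<in> (*) d ` R" for z
  proof
    assume "z \<in> frac_inv R {y. y * d \<in> R}"
    moreover have "1 / d \<in> {y. y * d \<in> R}" using assms(2) R(2) by simp
    ultimately have "z * (1 / d) \<in> R" unfolding frac_inv_def by blast
    moreover have "z = d * (z * (1 / d))" using assms(2) by simp
    ultimately show "z \<in> (*) d ` R" by blast
  next
    assume "z \<in> (*) d ` R"
    then show "z \<in> frac_inv R {y. y * d \<in> R}"
      unfolding frac_inv_def using R(4) by (auto simp: mult.commute mult.left_commute)
  qed
  then show ?thesis unfolding v_op_def inv by blast
qed

definition adjoin :: "'a::field set \<Rightarrow> 'a \<Rightarrow> 'a set" where
  "adjoin R x = gen_submod R (range ((^) x))"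

lemma submod_adjoin: "submod R (adjoin R x)"
  unfolding adjoin_def by (rule submod_gen_submod)

lemma power_mem_adjoin: "x ^ n \<in> adjoin R x"
  unfolding adjoin_def using subset_gen_submod by blast

lemma subset_adjoin: "R \<subseteq> adjoin R x"
proof
  fix r assume "r \<in> R"
  then have "r * x ^ 0 \<in> adjoin R x"
    by (rule submodD(3)[OF submod_adjoin _ power_mem_adjoin])
  then show "r \<in> adjoin R x" by simp
qed

lemma adjoin_induct:
  assumes "t \<in> adjoin R x" "submod R M" "\<And>n. x ^ n \<in> M"
  shows "t \<in> M"
  using assms gen_submod_least[of R M "range ((^) x)"] unfolding adjoin_def by blast

lemma adjoin_mult_closed:
  assumes "s \<in> adjoin R x" "t \<in> adjoin R x"
  shows "s * t \<in> adjoin R x"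
proof -
  have sub: "submod R {y. z * y \<in> adjoin R x}" for z
    using submod_adjoin[of R x] unfolding submod_def by (auto simp: distrib_left mult.left_commute)
  have powers: "t \<in> {y. x ^ m * y \<in> adjoin R x}" for m
    using assms(2) sub by (rule adjoin_induct) (simp add: power_mem_adjoin flip: power_add)
  have "s \<in> {y. t * y \<in> adjoin R x}"
    using assms(1) sub by (rule adjoin_induct) (use powers in \<open>simp add: mult.commute\<close>)
  then show ?thesis by (simp add: mult.commute)
qed

lemma adjoin_scaled_subset:
  assumes "domain_with_qf R" "\<forall>n. d * x ^ n \<in> R"
  shows "(*) d ` adjoin R x \<subseteq> R"
proof -
  have "submod R {y. d * y \<in> R}"
    using assms(1) unfolding submod_def domain_with_qf_def
    by (auto simp: distrib_left mult.left_commute)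
  then show ?thesis using assms(2) adjoin_induct by blast
qed

lemma nz_ideal_scaled:
  assumes "submod R M" "1 \<in> M" "d \<noteq> 0" "(*) d ` M \<subseteq> R"
  shows "nz_ideal R ((*) d ` M)"
  using assms submod_scaled[OF assms(1)] unfolding nz_ideal_def
  by (metis image_eqI mult_1_right singletonD)

lemma star_reduction_principal_adjoin:
  assumes dom: "domain_with_qf R" and d: "d \<noteq> 0" "\<forall>n. d * x ^ n \<in> R"
  shows "star_reduction R st ((*) d ` R) ((*) d ` adjoin R x)"
proof -
  let ?T = "adjoin R x"
  let ?I = "(*) d ` ?T" and ?J = "(*) d ` R"
  note R = domain_with_qfD[OF dom]
  have one: "1 \<in> ?T" using power_mem_adjoin[of x 0] by simp
  have I: "nz_ideal R ?I"
    using nz_ideal_scaled[OF submod_adjoin one d(1) adjoin_scaled_subset[OF dom d(2)]] .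
  have "d \<in> R" using d(2) by (metis power_0 mult_1_right)
  then have "?J \<subseteq> R" using R(4) by blast
  then have J: "nz_ideal R ?J"
    by (rule nz_ideal_scaled[OF submod_domain[OF dom] R(2) d(1)])
  have I1: "ideal_pow R ?I 1 = ?I"
    using ideal_mult_domain_right[OF _ R(2)] I unfolding nz_ideal_def by simp
  have "{a * b |a b. a \<in> ?J \<and> b \<in> ?I} = (*) (d * d) ` ?T"
  proof (intro set_eqI iffI)
    fix z assume "z \<in> {a * b |a b. a \<in> ?J \<and> b \<in> ?I}"
    then obtain r t where rt: "r \<in> R" "t \<in> ?T" "z = (d * r) * (d * t)" by blast
    then have "z = d * d * (r * t)" by (simp add: algebra_simps)
    then show "z \<in> (*) (d * d) ` ?T" using submodD(3)[OF submod_adjoin rt(1,2)] by blast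
  next
    fix z assume "z \<in> (*) (d * d) ` ?T"
    then obtain t where "t \<in> ?T" "z = (d * 1) * (d * t)" by auto
    then show "z \<in> {a * b |a b. a \<in> ?J \<and> b \<in> ?I}" using R(2) by blast
  qed
  also have "\<dots> = {a * b |a b. a \<in> ?I \<and> b \<in> ?I}"
  proof (intro set_eqI iffI)
    fix z assume "z \<in> (*) (d * d) ` ?T"
    then obtain t where "t \<in> ?T" "z = (d * 1) * (d * t)" by auto
    then show "z \<in> {a * b |a b. a \<in> ?I \<and> b \<in> ?I}" using one by blast
  next
    fix z assume "z \<in> {a * b |a b. a \<in> ?I \<and> b \<in> ?I}"
    then obtain s t where st: "s \<in> ?T" "t \<in> ?T" "z = (d * s) * (d * t)" by blast
    then have "z = d * d * (s * t)" by (simp add: algebra_simps)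
    then show "z \<in> (*) (d * d) ` ?T" using adjoin_mult_closed[OF st(1,2)] by blast
  qed
  finally have product: "ideal_mult R ?J (ideal_pow R ?I 1) = ideal_pow R ?I (Suc 1)"
    by (simp only: ideal_pow.simps I1 ideal_mult_def)
  have "?J \<subseteq> ?I" using subset_adjoin by (rule image_mono)
  with J product show ?thesis
    unfolding star_reduction_def by (intro conjI exI[of _ 1]) simp_all
qed

lemma completely_integrally_closed_if_basic:
  assumes dom: "domain_with_qf R"
    and basic: "\<And>I. nz_ideal R I \<Longrightarrow> star_basic R st I"
    and extensive: "\<And>I. nz_ideal R I \<Longrightarrow> I \<subseteq> st I"
    and principal: "\<And>d. d \<noteq> 0 \<Longrightarrow> st ((*) d ` R) = (*) d ` R"
  shows "completely_integrally_closed R"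
  unfolding completely_integrally_closed_def
proof (intro allI impI)
  fix x assume "\<exists>d\<in>R. d \<noteq> 0 \<and> (\<forall>n. d * x ^ n \<in> R)"
  then obtain d where d: "d \<noteq> 0" "\<forall>n. d * x ^ n \<in> R" by blast
  let ?I = "(*) d ` adjoin R x"
  have red: "star_reduction R st ((*) d ` R) ?I"
    by (rule star_reduction_principal_adjoin[OF dom d])
  have I: "nz_ideal R ?I"
    using nz_ideal_scaled[OF submod_adjoin _ d(1) adjoin_scaled_subset[OF dom d(2)]]
      power_mem_adjoin[of x 0] by simp
  have "?I \<subseteq> (*) d ` R"
    using extensive[OF I] basic[OF I] red principal[OF d(1)] unfolding star_basic_def by simp
  moreover have "d * x \<in> ?I" using power_mem_adjoin[of x 1] by (metis image_eqI power_one_right)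
  ultimately obtain r where "r \<in> R" "d * x = d * r" by blast
  then show "x \<in> R" using d(1) by simp
qed

lemma mem_if_stabilizes_frac_inv:
  assumes cic: "completely_integrally_closed R"
    and A: "A \<subseteq> R" "a \<in> A" "a \<noteq> 0"
    and stable: "\<And>w. w \<in> frac_inv R A \<Longrightarrow> u * w \<in> frac_inv R A"
  shows "u \<in> R"
proof -
  have "u ^ k \<in> frac_inv R A" for k
  proof (induction k)
    case 0
    then show ?case using A(1) unfolding frac_inv_def by auto
  next
    case (Suc k)
    then show ?case using stable by simp
  qed
  then have "a * u ^ k \<in> R" for k
    using A(2) unfolding frac_inv_def by (auto simp: mult.commute)
  then show ?thesis
    using cic A unfolding completely_integrally_closed_def by blast
qed

lemma frac_inv_cancel:
  assumes dom: "domain_with_qf R" and cic: "completely_integrally_closed R"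
    and A: "A \<subseteq> R" "submod R A" "a \<in> A" "a \<noteq> 0"
    and eq: "frac_inv R (ideal_mult R J A) = frac_inv R (ideal_mult R I A)"
  shows "frac_inv R J \<subseteq> frac_inv R I"
proof
  fix y assume y: "y \<in> frac_inv R J"
  have products: "frac_inv R {j * b |j b. j \<in> J \<and> b \<in> A} = frac_inv R {i * b |i b. i \<in> I \<and> b \<in> A}"
    using eq unfolding ideal_mult_def frac_inv_gen_submod[OF dom] .
  have stable: "w * y \<in> frac_inv R {i * b |i b. i \<in> I \<and> b \<in> A}" if w: "w \<in> frac_inv R A" for w
  proof -
    have "w * ((y * j) * b) \<in> R" if "j \<in> J" "b \<in> A" for j b
      using w y that submodD(3)[OF A(2)] unfolding frac_inv_def by blast
    then have "w * y \<in> frac_inv R {j * b |j b. j \<in> J \<and> b \<in> A}"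
      unfolding frac_inv_def by (auto simp: algebra_simps)
    then show ?thesis using products by simp
  qed
  have "y * i \<in> R" if i: "i \<in> I" for i
  proof (rule mem_if_stabilizes_frac_inv[OF cic A(1,3,4)])
    fix w assume "w \<in> frac_inv R A"
    then have wy: "w * y \<in> frac_inv R {i * b |i b. i \<in> I \<and> b \<in> A}" by (rule stable)
    show "y * i * w \<in> frac_inv R A"
      unfolding frac_inv_def
    proof (intro CollectI ballI)
      fix b assume "b \<in> A"
      then have "w * y * (i * b) \<in> R" using wy i unfolding frac_inv_def by blast
      then show "y * i * w * b \<in> R" by (simp add: ac_simps)
    qed
  qed
  then show "y \<in> frac_inv R I" unfolding frac_inv_def by blast
qed

lemma v_basic_if_completely_integrally_closed:
  assumes dom: "domain_with_qf R" and cic: "completely_integrally_closed R"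
    and I: "nz_ideal R I"
  shows "star_basic R (v_op R) I"
  unfolding star_basic_def
proof (intro allI impI)
  fix J assume "star_reduction R (v_op R) J I"
  then obtain n where JI: "J \<subseteq> I"
    and eq: "v_op R (ideal_mult R J (ideal_pow R I n)) = v_op R (ideal_pow R I (Suc n))"
    unfolding star_reduction_def by blast
  have IR: "I \<subseteq> R" and "I \<noteq> {0}" "0 \<in> I" using I unfolding nz_ideal_def submod_def by auto
  then obtain i where i: "i \<in> I" "i \<noteq> 0" by blast
  have "frac_inv R J \<subseteq> frac_inv R I"
  proof (rule frac_inv_cancel[OF dom cic ideal_pow_subset[OF dom IR] submod_ideal_pow[OF dom]])
    show "i ^ n \<in> ideal_pow R I n" "i ^ n \<noteq> 0" using power_mem_ideal_pow[OF dom i(1)] i(2) by auto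
    show "frac_inv R (ideal_mult R J (ideal_pow R I n)) = frac_inv R (ideal_mult R I (ideal_pow R I n))"
      using arg_cong[OF eq, of "frac_inv R"] by (simp add: frac_inv_v_op)
  qed
  moreover have "frac_inv R I \<subseteq> frac_inv R J" using JI by (rule frac_inv_antimono)
  ultimately have "frac_inv R J = frac_inv R I" by (rule subset_antisym)
  then show "v_op R J = v_op R I" unfolding v_op_def by simp
qed

theorem proposition1p4:
  fixes R :: "'a::field set" and st :: "'a set \<Rightarrow> 'a set"
  assumes "domain_with_qf R" and "star_op R st"
  shows "((\<forall>I. nz_ideal R I \<longrightarrow> star_basic R st I) \<longrightarrow> completely_integrally_closed R)
       \<and> ((\<forall>I. nz_ideal R I \<longrightarrow> star_basic R (v_op R) I) \<longleftrightarrow> completely_integrally_closed R)"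
proof (intro conjI impI iffI)
  have star_scale: "\<And>I a. frac_ideal R I \<Longrightarrow> a \<noteq> 0 \<Longrightarrow> st ((*) a ` I) = (*) a ` st I"
    and star_domain: "st R = R" and star_ext: "\<And>I. frac_ideal R I \<Longrightarrow> I \<subseteq> st I"
    using assms(2) unfolding star_op_def by auto
  have star_principal: "st ((*) d ` R) = (*) d ` R" if "d \<noteq> 0" for d
    using star_scale[OF frac_ideal_domain[OF assms(1)] that] star_domain by simp
  have star_extensive: "I \<subseteq> st I" if "nz_ideal R I" for I
    by (rule star_ext[OF nz_ideal_imp_frac_ideal[OF assms(1) that]])
  show "completely_integrally_closed R" if "\<forall>I. nz_ideal R I \<longrightarrow> star_basic R st I"
    by (rule completely_integrally_closed_if_basic[OF assms(1)])
      (use that in blast, erule star_extensive, erule star_principal)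
  show "completely_integrally_closed R" if "\<forall>I. nz_ideal R I \<longrightarrow> star_basic R (v_op R) I"
    by (rule completely_integrally_closed_if_basic[OF assms(1)])
      (use that in blast, rule subset_v_op, erule v_op_principal[OF assms(1)])
  show "\<forall>I. nz_ideal R I \<longrightarrow> star_basic R (v_op R) I" if "completely_integrally_closed R"
    using v_basic_if_completely_integrally_closed[OF assms(1) that] by blast
qed

end
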